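(* Let $\mathcal{C},\mathcal{C}'$ be generalized categories. The following two conditions are equivalent, and if either holds then $\mathcal{C}$ and $\mathcal{C}'$ are equivalent (i.e. their categories of invertibles $\tilde{\mathcal{C}}$ and $\tilde{\mathcal{C}'}$ are isomorphic): (1) there are functors $F:\mathcal{C}\to\mathcal{C}'$ and $G:\mathcal{C}'\to\mathcal{C}$ such that the induced maps $\tilde F:\tilde{\mathcal{C}}\to\tilde{\mathcal{C}'}$ and $\tilde G:\tilde{\mathcal{C}'}\to\tilde{\mathcal{C}}$ are mutually inverse; (2) there are functors $F:\mathcal{C}\to\mathcal{C}'$ and $G:\mathcal{C}'\to\mathcal{C}$ with $F\circ G\cong\mathrm{id}_{\mathcal{C}'}$ and $G\circ F\cong\mathrm{id}_{\mathcal{C}}$.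
   Context: A generalized category is a tuple $(\mathcal{C},\le,s,t,\cdot)$ where $\mathcal{C}$ is a set, $\le$ a relation on $\mathcal{C}$, $s,t:\mathcal{C}\to\mathcal{C}$ maps (write $\bar a = s(a)$, $\hat a = t(a)$), and $\cdot$ a partially defined binary operation (write $ab$), such that: (1) $\le$ is a partial order; (2) $ab$ is defined iff $s(a)\le t(b)$; (3) if $(ab)c$ or $a(bc)$ is defined then $(ab)c=a(bc)$; (4) if $ab$ is defined then $s(ab)=s(b)$ and $t(ab)=t(a)$; (5) for every $a$ there is $b$ with $s(b)=t(b)=a$ such that $bc=c$ whenever $bc$ is defined and $cb=c$ whenever $cb$ is defined; this $b$ is unique, denoted $1_a$; (6) if $s(a)=t(a)=a$ then $ba=b$ whenever $ba$ is defined and $ab=b$ whenever $ab$ is defined; (7) if $a\le b$ then $s(a)\le s(b)$, $t(a)\le t(b)$ and $1_a\le 1_b$; and if $a\le b$, $c\le d$ and $ac,bd$ are defined then $ac\le bd$. A functor $F:\mathcal{C}\to\mathcal{D}$ is a map with $a\le b\Rightarrow F(a)\le F(b)$, $F(\bar a)=\overline{F(a)}$, $F(\hat a)=\widehat{F(a)}$, $F(ab)=F(a)F(b)$ whenever $ab$ is defined, and $F(1_a)=1_{F(a)}$. An element $a$ is invertible if there is $b$ with $ab=1_{\hat a}$, $ba=1_{\bar a}$. Write $a\sim b$ if there exist invertible $\theta_1,\theta_2$ with $\theta_1 a=b\theta_2$; $\tilde a$ denotes the $\sim$-class of $a$. The category of invertibles $\tilde{\mathcal{C}}$ is the set of $\sim$-classes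 with source $\tilde a\mapsto\widetilde{1_{\bar a}}$, target $\tilde a\mapsto\widetilde{1_{\hat a}}$, trivial order, and product $\tilde a\cdot\tilde b=\{\theta_1 a\theta_2 b\theta_3:\theta_i\text{ invertible},\ \theta_1a\theta_2b\theta_3\text{ defined}\}$; a functor $F$ induces $\tilde F(\tilde a):=\widetilde{F(a)}$. For functors $F,G:\mathcal{C}\to\mathcal{C}'$, $F\cong G$ means there exist maps $\theta_1,\theta_2:\mathcal{C}\to\mathcal{C}'$ with $\theta_1(a),\theta_2(a)$ invertible for all $a$ and $\theta_1(a)F(a)=G(a)\theta_2(a)$ (both sides defined) for all $a\in\mathcal{C}$. *)

theory Defs
  imports Main
begin

text \<open>A generalized category on a carrier set. The product is a total HOL function
  whose value is only meaningful where it is defined, i.e. where src a <= tgt b.\<close>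

record 'a gcat =
  carrier :: "'a set"
  le :: "'a \<Rightarrow> 'a \<Rightarrow> bool"
  src :: "'a \<Rightarrow> 'a"
  tgt :: "'a \<Rightarrow> 'a"
  mult :: "'a \<Rightarrow> 'a \<Rightarrow> 'a"

definition defd :: "'a gcat \<Rightarrow> 'a \<Rightarrow> 'a \<Rightarrow> bool" where
  "defd C a b \<longleftrightarrow> le C (src C a) (tgt C b)"

definition is_unit_of :: "'a gcat \<Rightarrow> 'a \<Rightarrow> 'a \<Rightarrow> bool" where
  "is_unit_of C a b \<longleftrightarrow> b \<in> carrier C \<and> src C b = a \<and> tgt C b = a \<and>
     (\<forall>c\<in>carrier C. defd C b c \<longrightarrow> mult C b c = c) \<and>
     (\<forall>c\<in>carrier C. defd C c b \<longrightarrow> mult C c b = c)"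

definition unit :: "'a gcat \<Rightarrow> 'a \<Rightarrow> 'a" where
  "unit C a = (THE b. is_unit_of C a b)"

definition gencat :: "'a gcat \<Rightarrow> bool" where
  "gencat C \<longleftrightarrow>
     (\<forall>a\<in>carrier C. src C a \<in> carrier C \<and> tgt C a \<in> carrier C) \<and>
     (\<forall>a\<in>carrier C. \<forall>b\<in>carrier C. defd C a b \<longrightarrow> mult C a b \<in> carrier C) \<and>
     \<comment> \<open>(1) partial order\<close>
     (\<forall>a\<in>carrier C. le C a a) \<and>
     (\<forall>a\<in>carrier C. \<forall>b\<in>carrier C. le C a b \<and> le C b a \<longrightarrow> a = b) \<and>
     (\<forall>a\<in>carrier C. \<forall>b\<in>carrier C. \<forall>c\<in>carrier C. le C a b \<and> le C b c \<longrightarrow> le C a c) \<and>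
     \<comment> \<open>(3) associativity\<close>
     (\<forall>a\<in>carrier C. \<forall>b\<in>carrier C. \<forall>c\<in>carrier C.
        ((defd C a b \<and> defd C (mult C a b) c) \<or> (defd C b c \<and> defd C a (mult C b c)))
        \<longrightarrow> (defd C a b \<and> defd C (mult C a b) c \<and> defd C b c \<and> defd C a (mult C b c) \<and>
             mult C (mult C a b) c = mult C a (mult C b c))) \<and>
     \<comment> \<open>(4)\<close>
     (\<forall>a\<in>carrier C. \<forall>b\<in>carrier C. defd C a b \<longrightarrow>
        src C (mult C a b) = src C b \<and> tgt C (mult C a b) = tgt C a) \<and>
     \<comment> \<open>(5) existence of units (uniqueness follows)\<close>
     (\<forall>a\<in>carrier C. \<exists>b. is_unit_of C a b) \<and>
     \<comment> \<open>(6)\<close>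
     (\<forall>a\<in>carrier C. src C a = a \<and> tgt C a = a \<longrightarrow>
        (\<forall>b\<in>carrier C. (defd C b a \<longrightarrow> mult C b a = b) \<and> (defd C a b \<longrightarrow> mult C a b = b))) \<and>
     \<comment> \<open>(7)\<close>
     (\<forall>a\<in>carrier C. \<forall>b\<in>carrier C. le C a b \<longrightarrow>
        le C (src C a) (src C b) \<and> le C (tgt C a) (tgt C b) \<and> le C (unit C a) (unit C b)) \<and>
     (\<forall>a\<in>carrier C. \<forall>b\<in>carrier C. \<forall>c\<in>carrier C. \<forall>d\<in>carrier C.
        le C a b \<and> le C c d \<and> defd C a c \<and> defd C b d \<longrightarrow> le C (mult C a c) (mult C b d))"

text \<open>In the associativity clause, "(ab)c or a(bc) defined" is read as: the
  iterated product is defined; then both are defined and equal.\<close>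

definition gfunctor :: "'a gcat \<Rightarrow> 'b gcat \<Rightarrow> ('a \<Rightarrow> 'b) \<Rightarrow> bool" where
  "gfunctor C D F \<longleftrightarrow>
     (\<forall>a\<in>carrier C. F a \<in> carrier D) \<and>
     (\<forall>a\<in>carrier C. \<forall>b\<in>carrier C. le C a b \<longrightarrow> le D (F a) (F b)) \<and>
     (\<forall>a\<in>carrier C. F (src C a) = src D (F a) \<and> F (tgt C a) = tgt D (F a)) \<and>
     (\<forall>a\<in>carrier C. \<forall>b\<in>carrier C. defd C a b \<longrightarrow> F (mult C a b) = mult D (F a) (F b)) \<and>
     (\<forall>a\<in>carrier C. F (unit C a) = unit D (F a))"

definition invertible :: "'a gcat \<Rightarrow> 'a \<Rightarrow> bool" where
  "invertible C a \<longleftrightarrow> a \<in> carrier C \<and> (\<exists>b\<in>carrier C.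
      defd C a b \<and> mult C a b = unit C (tgt C a) \<and>
      defd C b a \<and> mult C b a = unit C (src C a))"

definition sim :: "'a gcat \<Rightarrow> 'a \<Rightarrow> 'a \<Rightarrow> bool" where
  "sim C a b \<longleftrightarrow> a \<in> carrier C \<and> b \<in> carrier C \<and>
     (\<exists>t1 t2. invertible C t1 \<and> invertible C t2 \<and> defd C t1 a \<and> defd C b t2 \<and>
        mult C t1 a = mult C b t2)"

definition cls :: "'a gcat \<Rightarrow> 'a \<Rightarrow> 'a set" where
  "cls C a = {b \<in> carrier C. sim C a b}"

definition classes :: "'a gcat \<Rightarrow> 'a set set" where
  "classes C = cls C ` carrier C"

text \<open>Structure of the category of invertibles (the order is trivial).\<close>

definition tsrc :: "'a gcat \<Rightarrow> 'a set \<Rightarrow> 'a set" where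
  "tsrc C X = cls C (unit C (src C (SOME a. a \<in> X)))"

definition ttgt :: "'a gcat \<Rightarrow> 'a set \<Rightarrow> 'a set" where
  "ttgt C X = cls C (unit C (tgt C (SOME a. a \<in> X)))"

definition tprod :: "'a gcat \<Rightarrow> 'a set \<Rightarrow> 'a set \<Rightarrow> 'a set" where
  "tprod C X Y = {mult C (mult C (mult C (mult C t1 a) t2) b) t3 | t1 a t2 b t3.
      a \<in> X \<and> b \<in> Y \<and> invertible C t1 \<and> invertible C t2 \<and> invertible C t3 \<and>
      defd C t1 a \<and> defd C (mult C t1 a) t2 \<and> defd C (mult C (mult C t1 a) t2) b \<and>
      defd C (mult C (mult C (mult C t1 a) t2) b) t3}"

definition tprod_cls :: "'a gcat \<Rightarrow> 'a set \<Rightarrow> 'a set \<Rightarrow> 'a set set" where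
  "tprod_cls C X Y = cls C ` tprod C X Y"

definition tmap :: "'a gcat \<Rightarrow> 'b gcat \<Rightarrow> ('a \<Rightarrow> 'b) \<Rightarrow> 'a set \<Rightarrow> 'b set" where
  "tmap C D F X = cls D (F (SOME a. a \<in> X))"

definition tilde_iso :: "'a gcat \<Rightarrow> 'b gcat \<Rightarrow> bool" where
  "tilde_iso C D \<longleftrightarrow> (\<exists>\<Phi>. bij_betw \<Phi> (classes C) (classes D) \<and>
     (\<forall>X\<in>classes C. \<Phi> (tsrc C X) = tsrc D (\<Phi> X) \<and> \<Phi> (ttgt C X) = ttgt D (\<Phi> X)) \<and>
     (\<forall>X\<in>classes C. \<forall>Y\<in>classes C. \<Phi> ` tprod_cls C X Y = tprod_cls D (\<Phi> X) (\<Phi> Y)))"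

definition nat_iso :: "'a gcat \<Rightarrow> 'b gcat \<Rightarrow> ('a \<Rightarrow> 'b) \<Rightarrow> ('a \<Rightarrow> 'b) \<Rightarrow> bool" where
  "nat_iso C D F G \<longleftrightarrow> (\<exists>t1 t2. \<forall>a\<in>carrier C.
     invertible D (t1 a) \<and> invertible D (t2 a) \<and>
     defd D (t1 a) (F a) \<and> defd D (G a) (t2 a) \<and>
     mult D (t1 a) (F a) = mult D (G a) (t2 a))"

end

theory Submission
  imports Defs
begin

text \<open>The order of a generalized category matters only through definedness, and the unit
  laws force a defined product \<open>ab\<close> to satisfy \<open>s(a) = t(b)\<close>; so \<open>\<sim>\<close> is an equivalence
  relation, and a functor, which preserves invertibles, descends to \<open>\<sim>\<close>-classes compatibly
  with the induced source, target and product. Choosing the invertibles pointwise,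
  \<open>G \<circ> F \<cong> id\<close> says exactly that \<open>G (F a) \<sim> a\<close> for every \<open>a\<close>, i.e. that
  \<open>\<tilde>G \<circ> \<tilde>F = id\<close>. When \<open>\<tilde>F\<close> and \<open>\<tilde>G\<close> are mutually inverse, \<open>\<tilde>F\<close> is a bijection on
  classes; both maps send products into products, and applying \<open>\<tilde>F\<close> to the inclusion
  for \<open>\<tilde>G\<close> yields the reverse inclusion, so \<open>\<tilde>F\<close> preserves products exactly.\<close>

locale gen_category =
  fixes C :: "'a gcat"
  assumes gencat: "gencat C"
begin

lemma src_closed [simp]: "a \<in> carrier C \<Longrightarrow> src C a \<in> carrier C"
  and tgt_closed [simp]: "a \<in> carrier C \<Longrightarrow> tgt C a \<in> carrier C"
  using gencat unfolding gencat_def by auto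

lemma mult_closed_defd: "a \<in> carrier C \<Longrightarrow> b \<in> carrier C \<Longrightarrow> defd C a b \<Longrightarrow> mult C a b \<in> carrier C"
  using gencat unfolding gencat_def by (elim conjE) blast

lemma le_refl: "a \<in> carrier C \<Longrightarrow> le C a a"
  using gencat unfolding gencat_def by (elim conjE) blast

lemma mult_assoc_defd:
  "\<lbrakk>a \<in> carrier C; b \<in> carrier C; c \<in> carrier C; defd C a b; defd C (mult C a b) c\<rbrakk>
    \<Longrightarrow> mult C (mult C a b) c = mult C a (mult C b c)"
  using gencat unfolding gencat_def by (elim conjE) blast

lemma src_tgt_mult_defd:
  "\<lbrakk>a \<in> carrier C; b \<in> carrier C; defd C a b\<rbrakk>
    \<Longrightarrow> src C (mult C a b) = src C b \<and> tgt C (mult C a b) = tgt C a"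
  using gencat unfolding gencat_def by (elim conjE) blast

lemma is_unit_of_unique: "\<lbrakk>x \<in> carrier C; is_unit_of C x u; is_unit_of C x u'\<rbrakk> \<Longrightarrow> u = u'"
  unfolding is_unit_of_def defd_def by (metis le_refl)

lemma is_unit_of_unit: "x \<in> carrier C \<Longrightarrow> is_unit_of C x (unit C x)"
  using gencat is_unit_of_unique unfolding gencat_def unit_def by (metis theI)

lemma unit_closed [simp]: "x \<in> carrier C \<Longrightarrow> unit C x \<in> carrier C"
  and src_unit [simp]: "x \<in> carrier C \<Longrightarrow> src C (unit C x) = x"
  and tgt_unit [simp]: "x \<in> carrier C \<Longrightarrow> tgt C (unit C x) = x"
  using is_unit_of_unit unfolding is_unit_of_def by auto

lemma defd_iff [simp]: "a \<in> carrier C \<Longrightarrow> b \<in> carrier C \<Longrightarrow> defd C a b \<longleftrightarrow> src C a = tgt C b"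
proof
  assume a: "a \<in> carrier C" and b: "b \<in> carrier C" and ab: "defd C a b"
  let ?u = "unit C (src C a)"
  have ub: "defd C ?u b"
    using a ab unfolding defd_def by simp
  then have "mult C ?u b = b"
    using is_unit_of_unit[of "src C a"] a b unfolding is_unit_of_def by auto
  then show "src C a = tgt C b"
    using src_tgt_mult_defd[OF unit_closed b ub] a by simp
qed (simp add: defd_def le_refl)

lemma mult_closed [simp]: "\<lbrakk>a \<in> carrier C; b \<in> carrier C; src C a = tgt C b\<rbrakk> \<Longrightarrow> mult C a b \<in> carrier C"
  and src_mult [simp]: "\<lbrakk>a \<in> carrier C; b \<in> carrier C; src C a = tgt C b\<rbrakk> \<Longrightarrow> src C (mult C a b) = src C b"
  and tgt_mult [simp]: "\<lbrakk>a \<in> carrier C; b \<in> carrier C; src C a = tgt C b\<rbrakk> \<Longrightarrow> tgt C (mult C a b) = tgt C a"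
  using mult_closed_defd src_tgt_mult_defd by simp_all

lemma mult_assoc:
  "\<lbrakk>a \<in> carrier C; b \<in> carrier C; c \<in> carrier C; src C a = tgt C b; src C b = tgt C c\<rbrakk>
    \<Longrightarrow> mult C (mult C a b) c = mult C a (mult C b c)"
  using mult_assoc_defd by simp

lemma unit_mult [simp]: "\<lbrakk>c \<in> carrier C; tgt C c = x\<rbrakk> \<Longrightarrow> mult C (unit C x) c = c"
  and mult_unit [simp]: "\<lbrakk>c \<in> carrier C; src C c = x\<rbrakk> \<Longrightarrow> mult C c (unit C x) = c"
  using is_unit_of_unit[of x] unfolding is_unit_of_def by auto

lemma invertibleE:
  assumes "invertible C t"
  obtains s where "t \<in> carrier C" "s \<in> carrier C" "src C s = tgt C t" "tgt C s = src C t"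
    "mult C t s = unit C (tgt C t)" "mult C s t = unit C (src C t)"
proof -
  obtain s where t: "t \<in> carrier C" and s: "s \<in> carrier C"
    and ts: "src C t = tgt C s" "mult C t s = unit C (tgt C t)"
    and st: "src C s = tgt C t" "mult C s t = unit C (src C t)"
    using assms unfolding invertible_def by auto
  have "tgt C s = tgt C (mult C s t)"
    using s t st(1) by simp
  also have "\<dots> = src C t"
    using t st(2) by simp
  finally show thesis
    using that t s ts st by blast
qed

lemma invertibleI:
  "\<lbrakk>t \<in> carrier C; s \<in> carrier C; src C s = tgt C t; src C t = tgt C s;
    mult C t s = unit C (tgt C t); mult C s t = unit C (src C t)\<rbrakk> \<Longrightarrow> invertible C t"
  unfolding invertible_def by auto

lemma invertible_closed: "invertible C t \<Longrightarrow> t \<in> carrier C"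
  unfolding invertible_def by blast

lemma invertible_unit: "x \<in> carrier C \<Longrightarrow> invertible C (unit C x)"
  by (rule invertibleI[of _ "unit C x"]) auto

lemma cancel_left:
  "\<lbrakk>s \<in> carrier C; t \<in> carrier C; x \<in> carrier C; src C s = tgt C t; src C t = tgt C x;
    mult C s t = unit C (src C t)\<rbrakk> \<Longrightarrow> mult C s (mult C t x) = x"
  by (simp add: mult_assoc [symmetric])

lemma invertible_mult:
  assumes u: "invertible C u" and t: "invertible C t" and ut: "src C u = tgt C t"
  shows "invertible C (mult C u t)"
proof -
  obtain u' where u': "u \<in> carrier C" "u' \<in> carrier C" "src C u' = tgt C u" "tgt C u' = src C u"
    "mult C u u' = unit C (tgt C u)" "mult C u' u = unit C (src C u)"
    using u by (rule invertibleE)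
  obtain t' where t': "t \<in> carrier C" "t' \<in> carrier C" "src C t' = tgt C t" "tgt C t' = src C t"
    "mult C t t' = unit C (tgt C t)" "mult C t' t = unit C (src C t)"
    using t by (rule invertibleE)
  have "mult C (mult C u t) (mult C t' u') = mult C u (mult C t (mult C t' u'))"
    using u' t' ut by (simp add: mult_assoc)
  also have "\<dots> = unit C (tgt C u)"
    using u' t' ut by (simp add: mult_assoc [symmetric])
  finally have right: "mult C (mult C u t) (mult C t' u') = unit C (tgt C (mult C u t))"
    using u' t' ut by simp
  have "mult C (mult C t' u') (mult C u t) = mult C t' (mult C u' (mult C u t))"
    using u' t' ut by (simp add: mult_assoc)
  also have "\<dots> = unit C (src C t)"
    using u' t' ut by (simp add: mult_assoc [symmetric])
  finally have left: "mult C (mult C t' u') (mult C u t) = unit C (src C (mult C u t))"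
    using u' t' ut by simp
  show ?thesis
    by (rule invertibleI [OF _ _ _ _ right left]) (use u' t' ut in simp_all)
qed

lemma simI:
  "\<lbrakk>invertible C t1; invertible C t2; a \<in> carrier C; b \<in> carrier C;
    src C t1 = tgt C a; src C b = tgt C t2; mult C t1 a = mult C b t2\<rbrakk> \<Longrightarrow> sim C a b"
  unfolding sim_def by (intro conjI exI [of _ t1] exI [of _ t2]) (auto dest: invertible_closed)

lemma simE:
  assumes "sim C a b"
  obtains t1 t2 where "invertible C t1" "invertible C t2" "a \<in> carrier C" "b \<in> carrier C"
    "src C t1 = tgt C a" "src C b = tgt C t2" "mult C t1 a = mult C b t2"
    "src C a = src C t2" "tgt C t1 = tgt C b"
proof -
  obtain t1 t2 where t: "invertible C t1" "invertible C t2" "a \<in> carrier C" "b \<in> carrier C"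
    "src C t1 = tgt C a" "src C b = tgt C t2" "mult C t1 a = mult C b t2"
    using assms invertible_closed unfolding sim_def by auto
  moreover have "src C a = src C t2" "tgt C t1 = tgt C b"
    using t invertible_closed by (metis src_mult tgt_mult)+
  ultimately show thesis
    by (rule that)
qed

lemma sim_refl: "a \<in> carrier C \<Longrightarrow> sim C a a"
  by (rule simI [of "unit C (tgt C a)" "unit C (src C a)"]) (auto simp: invertible_unit)

lemma sim_sym:
  assumes "sim C a b"
  shows "sim C b a"
proof -
  obtain t1 t2 where t: "invertible C t1" "invertible C t2" "a \<in> carrier C" "b \<in> carrier C"
    "src C t1 = tgt C a" "src C b = tgt C t2" "mult C t1 a = mult C b t2"
    "src C a = src C t2" "tgt C t1 = tgt C b"
    using assms by (rule simE)
  obtain s1 where s1: "t1 \<in> carrier C" "s1 \<in> carrier C" "src C s1 = tgt C t1" "tgt C s1 = src C t1"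
    "mult C t1 s1 = unit C (tgt C t1)" "mult C s1 t1 = unit C (src C t1)"
    using t(1) by (rule invertibleE)
  obtain s2 where s2: "t2 \<in> carrier C" "s2 \<in> carrier C" "src C s2 = tgt C t2" "tgt C s2 = src C t2"
    "mult C t2 s2 = unit C (tgt C t2)" "mult C s2 t2 = unit C (src C t2)"
    using t(2) by (rule invertibleE)
  have "mult C s1 b = mult C s1 (mult C (mult C b t2) s2)"
    using t s2 by (simp add: mult_assoc)
  also have "\<dots> = mult C s1 (mult C t1 (mult C a s2))"
    using t s1 s2 by (simp add: mult_assoc flip: t(7))
  also have "\<dots> = mult C a s2"
    using t s1 s2 by (simp add: cancel_left)
  finally have "mult C s1 b = mult C a s2" .
  moreover have "invertible C s1" "invertible C s2"
    using s1 s2 by (auto intro: invertibleI)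
  ultimately show ?thesis
    using t s1 s2 by (intro simI [of s1 s2]) auto
qed

lemma sim_trans:
  assumes "sim C a b" and "sim C b c"
  shows "sim C a c"
proof -
  obtain t1 t2 where t: "invertible C t1" "invertible C t2" "a \<in> carrier C" "b \<in> carrier C"
    "src C t1 = tgt C a" "src C b = tgt C t2" "mult C t1 a = mult C b t2"
    "src C a = src C t2" "tgt C t1 = tgt C b"
    using assms(1) by (rule simE)
  obtain u1 u2 where u: "invertible C u1" "invertible C u2" "b \<in> carrier C" "c \<in> carrier C"
    "src C u1 = tgt C b" "src C c = tgt C u2" "mult C u1 b = mult C c u2"
    "src C b = src C u2" "tgt C u1 = tgt C c"
    using assms(2) by (rule simE)
  note closed = invertible_closed [OF t(1)] invertible_closed [OF t(2)]
    invertible_closed [OF u(1)] invertible_closed [OF u(2)]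
  have "mult C (mult C u1 t1) a = mult C u1 (mult C b t2)"
    using t u closed by (simp add: mult_assoc flip: t(7))
  also have "\<dots> = mult C c (mult C u2 t2)"
    using t u closed by (simp add: mult_assoc [symmetric] flip: u(7))
  finally show ?thesis
    using t u closed by (intro simI [OF invertible_mult [of u1 t1] invertible_mult [of u2 t2]]) auto
qed

lemma cls_eq_iff: "a \<in> carrier C \<Longrightarrow> b \<in> carrier C \<Longrightarrow> cls C a = cls C b \<longleftrightarrow> sim C a b"
  unfolding cls_def using sim_refl sim_sym sim_trans by blast

lemma cls_eq: "sim C a b \<Longrightarrow> cls C a = cls C b"
  unfolding cls_def using sim_sym sim_trans by blast

lemma sim_some_cls: "a \<in> carrier C \<Longrightarrow> sim C a (SOME x. x \<in> cls C a)"
  unfolding cls_def by (rule someI2 [of _ a]) (auto intro: sim_refl)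

lemma sim_unit_src_tgt: "invertible C t \<Longrightarrow> sim C (unit C (src C t)) (unit C (tgt C t))"
  by (rule simI [of t t]) (simp_all add: invertible_closed)

lemma sim_unit_src: "sim C a b \<Longrightarrow> sim C (unit C (src C a)) (unit C (src C b))"
  by (elim simE) (metis sim_unit_src_tgt)

lemma sim_unit_tgt: "sim C a b \<Longrightarrow> sim C (unit C (tgt C a)) (unit C (tgt C b))"
  by (elim simE) (metis sim_unit_src_tgt)

lemma tsrc_cls: "a \<in> carrier C \<Longrightarrow> tsrc C (cls C a) = cls C (unit C (src C a))"
  unfolding tsrc_def by (metis cls_eq sim_sym sim_some_cls sim_unit_src)

lemma ttgt_cls: "a \<in> carrier C \<Longrightarrow> ttgt C (cls C a) = cls C (unit C (tgt C a))"
  unfolding ttgt_def by (metis cls_eq sim_sym sim_some_cls sim_unit_tgt)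

lemma tprod_subset_carrier:
  "X \<subseteq> carrier C \<Longrightarrow> Y \<subseteq> carrier C \<Longrightarrow> tprod C X Y \<subseteq> carrier C"
  unfolding tprod_def by (auto dest!: invertible_closed intro!: mult_closed_defd)

lemma tprod_cls_subset_classes:
  "X \<subseteq> carrier C \<Longrightarrow> Y \<subseteq> carrier C \<Longrightarrow> tprod_cls C X Y \<subseteq> classes C"
  unfolding tprod_cls_def classes_def by (intro image_mono tprod_subset_carrier)

end

lemma classes_subset_carrier: "X \<in> classes C \<Longrightarrow> X \<subseteq> carrier C"
  unfolding classes_def cls_def by blast

lemma classesE: "X \<in> classes C \<Longrightarrow> (\<And>x. x \<in> carrier C \<Longrightarrow> X = cls C x \<Longrightarrow> P) \<Longrightarrow> P"
  unfolding classes_def by blast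

lemma cls_in_classes: "x \<in> carrier C \<Longrightarrow> cls C x \<in> classes C"
  unfolding classes_def by blast

lemma tprod_mono: "X \<subseteq> X' \<Longrightarrow> Y \<subseteq> Y' \<Longrightarrow> tprod C X Y \<subseteq> tprod C X' Y'"
  unfolding tprod_def by blast

locale gen_functor = C: gen_category C + D: gen_category D
  for C :: "'a gcat" and D :: "'b gcat" +
  fixes F :: "'a \<Rightarrow> 'b"
  assumes gfunctor: "gfunctor C D F"
begin

lemma map_closed [simp]: "a \<in> carrier C \<Longrightarrow> F a \<in> carrier D"
  and map_src [simp]: "a \<in> carrier C \<Longrightarrow> src D (F a) = F (src C a)"
  and map_tgt [simp]: "a \<in> carrier C \<Longrightarrow> tgt D (F a) = F (tgt C a)"
  and map_unit [simp]: "a \<in> carrier C \<Longrightarrow> unit D (F a) = F (unit C a)"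
  using gfunctor unfolding gfunctor_def by auto

lemma map_mult:
  "\<lbrakk>a \<in> carrier C; b \<in> carrier C; src C a = tgt C b\<rbrakk> \<Longrightarrow> mult D (F a) (F b) = F (mult C a b)"
  using gfunctor unfolding gfunctor_def by auto

lemma map_invertible:
  assumes "invertible C t"
  shows "invertible D (F t)"
proof -
  obtain s where s: "t \<in> carrier C" "s \<in> carrier C" "src C s = tgt C t" "tgt C s = src C t"
    "mult C t s = unit C (tgt C t)" "mult C s t = unit C (src C t)"
    using assms by (rule C.invertibleE)
  show ?thesis
    by (rule D.invertibleI [of _ "F s"]) (use s in \<open>simp_all add: map_mult\<close>)
qed

lemma map_sim:
  assumes "sim C a b"
  shows "sim D (F a) (F b)"
proof -
  obtain t1 t2 where t: "invertible C t1" "invertible C t2" "a \<in> carrier C" "b \<in> carrier C"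
    "src C t1 = tgt C a" "src C b = tgt C t2" "mult C t1 a = mult C b t2"
    using assms by (rule C.simE)
  show ?thesis
    by (rule D.simI [OF map_invertible [OF t(1)] map_invertible [OF t(2)]])
      (use t C.invertible_closed in \<open>simp_all add: map_mult\<close>)
qed

lemma image_cls_subset: "F ` cls C a \<subseteq> cls D (F a)"
  unfolding cls_def using map_sim by (auto elim: C.simE)

lemma tmap_cls: "a \<in> carrier C \<Longrightarrow> tmap C D F (cls C a) = cls D (F a)"
  unfolding tmap_def by (metis C.sim_some_cls D.cls_eq D.sim_sym map_sim)

lemma tmap_classes: "X \<in> classes C \<Longrightarrow> tmap C D F X \<in> classes D"
  by (metis classesE cls_in_classes map_closed tmap_cls)

lemma tmap_tsrc: "X \<in> classes C \<Longrightarrow> tmap C D F (tsrc C X) = tsrc D (tmap C D F X)"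
  by (auto elim!: classesE simp: tmap_cls C.tsrc_cls D.tsrc_cls)

lemma tmap_ttgt: "X \<in> classes C \<Longrightarrow> tmap C D F (ttgt C X) = ttgt D (tmap C D F X)"
  by (auto elim!: classesE simp: tmap_cls C.ttgt_cls D.ttgt_cls)

lemma map_defd_mult:
  "\<lbrakk>a \<in> carrier C; b \<in> carrier C; defd C a b\<rbrakk>
    \<Longrightarrow> defd D (F a) (F b) \<and> F (mult C a b) = mult D (F a) (F b)"
  by (simp add: map_mult)

lemma tprod_image:
  assumes "w \<in> tprod C X Y" and "X \<subseteq> carrier C" and "Y \<subseteq> carrier C"
  shows "F w \<in> tprod D (F ` X) (F ` Y)"
proof -
  obtain t1 a t2 b t3 where w: "w = mult C (mult C (mult C (mult C t1 a) t2) b) t3"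
    and ab: "a \<in> X" "b \<in> Y"
    and inv: "invertible C t1" "invertible C t2" "invertible C t3"
    and d: "defd C t1 a" "defd C (mult C t1 a) t2" "defd C (mult C (mult C t1 a) t2) b"
      "defd C (mult C (mult C (mult C t1 a) t2) b) t3"
    using assms(1) unfolding tprod_def by blast
  have c: "t1 \<in> carrier C" "a \<in> carrier C" "t2 \<in> carrier C" "b \<in> carrier C" "t3 \<in> carrier C"
    using ab inv assms(2,3) C.invertible_closed by auto
  have c1: "mult C t1 a \<in> carrier C"
    using c d by (intro C.mult_closed_defd)
  have c2: "mult C (mult C t1 a) t2 \<in> carrier C"
    using c c1 d by (intro C.mult_closed_defd)
  have c3: "mult C (mult C (mult C t1 a) t2) b \<in> carrier C"
    using c c2 d by (intro C.mult_closed_defd)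
  show ?thesis
    unfolding tprod_def mem_Collect_eq
    by (intro exI [of _ "F t1"] exI [of _ "F a"] exI [of _ "F t2"] exI [of _ "F b"] exI [of _ "F t3"])
      (use w ab inv c c1 c2 c3 map_defd_mult [OF c(1,2) d(1)] map_defd_mult [OF c1 c(3) d(2)]
        map_defd_mult [OF c2 c(4) d(3)] map_defd_mult [OF c3 c(5) d(4)] in \<open>simp add: map_invertible\<close>)
qed

lemma tmap_tprod_cls_subset:
  assumes "X \<in> classes C" and "Y \<in> classes C"
  shows "tmap C D F ` tprod_cls C X Y \<subseteq> tprod_cls D (tmap C D F X) (tmap C D F Y)"
proof
  obtain x y where x: "x \<in> carrier C" "X = cls C x" and y: "y \<in> carrier C" "Y = cls C y"
    using assms by (meson classesE)
  fix Z assume "Z \<in> tmap C D F ` tprod_cls C X Y"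
  then obtain w where w: "w \<in> tprod C X Y" and Z: "Z = tmap C D F (cls C w)"
    unfolding tprod_cls_def by blast
  have "w \<in> carrier C"
    using C.tprod_subset_carrier [OF classes_subset_carrier classes_subset_carrier, OF assms] w
    by (rule subsetD)
  then have "Z = cls D (F w)"
    using Z by (simp add: tmap_cls)
  moreover have "F w \<in> tprod D (F ` X) (F ` Y)"
    using w classes_subset_carrier [OF assms(1)] classes_subset_carrier [OF assms(2)]
    by (rule tprod_image)
  then have "F w \<in> tprod D (tmap C D F X) (tmap C D F Y)"
    using tprod_mono [OF image_cls_subset image_cls_subset] x y by (auto simp: tmap_cls)
  ultimately show "Z \<in> tprod_cls D (tmap C D F X) (tmap C D F Y)"
    unfolding tprod_cls_def by blast
qed

end

lemma nat_iso_id_iff_sim: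
  assumes "\<forall>x\<in>carrier C. H x \<in> carrier C"
  shows "nat_iso C C H id \<longleftrightarrow> (\<forall>x\<in>carrier C. sim C (H x) x)"
proof
  assume "nat_iso C C H id"
  then show "\<forall>x\<in>carrier C. sim C (H x) x"
    using assms unfolding nat_iso_def sim_def by fastforce
next
  assume "\<forall>x\<in>carrier C. sim C (H x) x"
  then have "\<forall>x\<in>carrier C. \<exists>t. invertible C (fst t) \<and> invertible C (snd t) \<and>
      defd C (fst t) (H x) \<and> defd C x (snd t) \<and> mult C (fst t) (H x) = mult C x (snd t)"
    unfolding sim_def by fastforce
  then obtain t where "\<forall>x\<in>carrier C. invertible C (fst (t x)) \<and> invertible C (snd (t x)) \<and>
      defd C (fst (t x)) (H x) \<and> defd C x (snd (t x)) \<and> mult C (fst (t x)) (H x) = mult C x (snd (t x))"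
    by (metis bchoice)
  then show "nat_iso C C H id"
    unfolding nat_iso_def by (intro exI [of _ "fst \<circ> t"] exI [of _ "snd \<circ> t"]) simp
qed

lemma tmap_inverse_iff_sim:
  assumes "gen_functor C D F" and "gen_functor D C G"
  shows "(\<forall>X\<in>classes C. tmap D C G (tmap C D F X) = X) \<longleftrightarrow> (\<forall>x\<in>carrier C. sim C (G (F x)) x)"
proof -
  interpret F: gen_functor C D F by fact
  interpret G: gen_functor D C G by fact
  have "tmap D C G (tmap C D F (cls C x)) = cls C x \<longleftrightarrow> sim C (G (F x)) x" if "x \<in> carrier C" for x
    using that by (simp add: F.tmap_cls G.tmap_cls F.C.cls_eq_iff)
  then show ?thesis
    by (auto elim!: classesE intro: cls_in_classes)
qed

lemma tmap_inverse_iff_nat_iso: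
  assumes "gen_functor C D F" and "gen_functor D C G"
  shows "(\<forall>X\<in>classes C. tmap D C G (tmap C D F X) = X) \<longleftrightarrow> nat_iso C C (G \<circ> F) id"
proof -
  interpret F: gen_functor C D F by fact
  interpret G: gen_functor D C G by fact
  show ?thesis
    by (simp add: tmap_inverse_iff_sim [OF assms] nat_iso_id_iff_sim)
qed

lemma tilde_iso_if_tmap_inverse:
  assumes F: "gen_functor C D F" and G: "gen_functor D C G"
    and GF: "\<forall>X\<in>classes C. tmap D C G (tmap C D F X) = X"
    and FG: "\<forall>Y\<in>classes D. tmap C D F (tmap D C G Y) = Y"
  shows "tilde_iso C D"
proof -
  interpret F: gen_functor C D F by fact
  interpret G: gen_functor D C G by fact
  have bij: "bij_betw (tmap C D F) (classes C) (classes D)"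
    by (rule bij_betw_byWitness [OF GF FG]) (auto intro: F.tmap_classes G.tmap_classes)
  have tprod: "tmap C D F ` tprod_cls C X Y = tprod_cls D (tmap C D F X) (tmap C D F Y)"
    if X: "X \<in> classes C" and Y: "Y \<in> classes C" for X Y
  proof
    show "tmap C D F ` tprod_cls C X Y \<subseteq> tprod_cls D (tmap C D F X) (tmap C D F Y)"
      using X Y by (rule F.tmap_tprod_cls_subset)
    show "tprod_cls D (tmap C D F X) (tmap C D F Y) \<subseteq> tmap C D F ` tprod_cls C X Y"
    proof
      fix Z assume Z: "Z \<in> tprod_cls D (tmap C D F X) (tmap C D F Y)"
      have "tmap D C G Z \<in> tprod_cls C X Y"
        using G.tmap_tprod_cls_subset [OF F.tmap_classes [OF X] F.tmap_classes [OF Y]] Z X Y GF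
        by auto
      moreover have "Z \<in> classes D"
        using F.D.tprod_cls_subset_classes [OF classes_subset_carrier classes_subset_carrier,
            OF F.tmap_classes [OF X] F.tmap_classes [OF Y]] Z
        by (rule subsetD)
      ultimately show "Z \<in> tmap C D F ` tprod_cls C X Y"
        using FG by (metis rev_image_eqI)
    qed
  qed
  show ?thesis
    unfolding tilde_iso_def
    by (intro exI [of _ "tmap C D F"] conjI ballI bij F.tmap_tsrc F.tmap_ttgt tprod)
qed

theorem mainTheorem9:
  fixes C :: "'a gcat" and D :: "'b gcat"
  assumes "gencat C" and "gencat D"
  shows "((\<exists>F G. gfunctor C D F \<and> gfunctor D C G \<and>
            (\<forall>X\<in>classes C. tmap D C G (tmap C D F X) = X) \<and>
            (\<forall>Y\<in>classes D. tmap C D F (tmap D C G Y) = Y))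
          \<longleftrightarrow>
          (\<exists>F G. gfunctor C D F \<and> gfunctor D C G \<and>
            nat_iso D D (F \<circ> G) id \<and> nat_iso C C (G \<circ> F) id))
       \<and> ((\<exists>F G. gfunctor C D F \<and> gfunctor D C G \<and>
            (\<forall>X\<in>classes C. tmap D C G (tmap C D F X) = X) \<and>
            (\<forall>Y\<in>classes D. tmap C D F (tmap D C G Y) = Y))
          \<longrightarrow> tilde_iso C D)"
proof -
  have functors: "gen_functor C D F" "gen_functor D C G"
    if "gfunctor C D F" "gfunctor D C G" for F G
    using assms that by (simp_all add: gen_functor_def gen_functor_axioms_def gen_category_def)
  show ?thesis
    using functors tmap_inverse_iff_nat_iso tilde_iso_if_tmap_inverse by meson
qed

end
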